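(* Let $d=\mu_+-\mu_-$, $\epsilon\in[0,d/4]$ and $K\in(1,\bar B_K(\epsilon))$, where $\bar B_K(\epsilon)=\min\{\exp((d-2\epsilon)^2/2),\ \phi^{-1}(d/\epsilon-2)\}$, $\phi:[1,\infty)\to[2,\infty)$, $\phi(x)=x+1/x$ (with $\phi^{-1}(+\infty):=+\infty$ when $\epsilon=0$). Define $$g(\epsilon;\theta,K)=\frac1K\exp\!\left(-\frac{(\theta+\epsilon-\mu_+)^2}{2K^2}\right)-\exp\!\left(-\frac{(\theta-\epsilon-\mu_-)^2}{2}\right).$$ Then for every $\theta\in[\theta_{\mathrm f},\theta^{(\epsilon)}_{\mathrm r}]$, $g(\epsilon;\theta,K)\le g(0;\theta,K)$.
   Context: Setting (one-dimensional Gaussian mixture). Fix real numbers $\mu_-<\mu_+$ and $K>1$, and let $d=\mu_+-\mu_-$. Let $(X,Y)$ be a random pair with $\Pr(Y=1)=\Pr(Y=-1)=\tfrac12$, $X\mid Y=-1\sim\mathcal N(\mu_-,1)$, and $X\mid Y=1\sim\mathcal N(\mu_+,K^2)$. For $\theta\in\mathbb R$, $f_\theta(x)=1$ if $x>\theta$ and $f_\theta(x)=-1$ otherwise. Class-conditional errors: $e_+(\theta)=\Pr(X\le\theta\mid Y=1)$, $e_-(\theta)=\Pr(X>\theta\mid Y=-1)$. For $\epsilon\ge0$, robust error: $R_{\mathrm{rob}}^{\epsilon}(\theta)=\tfrac12\Pr(X\le\theta+\epsilon\mid Y=1)+\tfrac12\Pr(X>\theta-\epsilon\mid Y=-1)$.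 $\theta_{\mathrm f}$ is the threshold in $[\mu_-,\mu_+]$ with $e_+(\theta_{\mathrm f})=e_-(\theta_{\mathrm f})$ (explicitly $\theta_{\mathrm f}=\mu_-+d/(K+1)$); $\theta^{(\epsilon)}_{\mathrm r}$ is the minimizer of $R^{\epsilon}_{\mathrm{rob}}$ over $[\mu_-,\mu_+]$. *)

theory Defs
  imports "HOL-Probability.Probability"
begin

definition gauss :: "real \<Rightarrow> real \<Rightarrow> real measure" where
  "gauss mu s = density lborel (normal_density mu s)"

text \<open>Robust error: 1/2 Pr(X \<le> theta+eps | Y=1) + 1/2 Pr(X > theta-eps | Y=-1),
  with X|Y=1 ~ N(mu_p, K^2) and X|Y=-1 ~ N(mu_m, 1).\<close>
definition R_rob :: "real \<Rightarrow> real \<Rightarrow> real \<Rightarrow> real \<Rightarrow> real \<Rightarrow> real" where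
  "R_rob mu_m mu_p K eps theta =
     1/2 * measure (gauss mu_p K) {..theta + eps} + 1/2 * measure (gauss mu_m 1) {theta - eps<..}"

definition theta_f :: "real \<Rightarrow> real \<Rightarrow> real \<Rightarrow> real" where
  "theta_f mu_m mu_p K = mu_m + (mu_p - mu_m) / (K + 1)"

definition phi :: "real \<Rightarrow> real" where
  "phi x = x + 1 / x"

definition phi_inv :: "real \<Rightarrow> real" where
  "phi_inv y = (THE x. 1 \<le> x \<and> phi x = y)"

text \<open>Upper bound on K; for eps = 0 the second term is +\<infinity>.\<close>
definition B_K :: "real \<Rightarrow> real \<Rightarrow> real \<Rightarrow> real" where
  "B_K mu_m mu_p eps =
     (if eps = 0 then exp ((mu_p - mu_m)^2 / 2)
      else min (exp ((mu_p - mu_m - 2 * eps)^2 / 2)) (phi_inv ((mu_p - mu_m) / eps - 2)))"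

definition g :: "real \<Rightarrow> real \<Rightarrow> real \<Rightarrow> real \<Rightarrow> real \<Rightarrow> real" where
  "g mu_m mu_p eps theta K =
     1 / K * exp (- ((theta + eps - mu_p)^2) / (2 * K^2)) - exp (- ((theta - eps - mu_m)^2) / 2)"

end

theory Submission
  imports Defs
begin

text \<open>The derivative of the robust error is a positive multiple of g(eps; t, K), and g(eps; t, K) > 0
  exactly when a convex quadratic in t exceeds 2 ln K. That quadratic lies below 2 ln K at
  mu_m + eps, so once g is positive it stays positive to the right; at the minimiser theta_r a
  positive derivative is impossible, hence g(eps; theta, K) \<le> 0 for mu_m + eps < theta \<le> theta_r.
  Multiplying g(eps; theta, K) by exp(x eps - eps^2/2), x = theta - mu_m, turns its second
  exponential into that of g(0; theta, K), and the bound on K (through eps (K + 1)^2 \<le> K d and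
  theta \<ge> theta_f) makes its first exponential at most that of g(0; theta, K) as well. As the weight
  is at least 1 and g(eps; theta, K) \<le> 0, the claim follows.\<close>

lemma cdf_density_has_real_derivative:
  fixes f :: "real \<Rightarrow> real"
  assumes fin: "finite_measure (density lborel f)"
    and cont: "continuous_on UNIV f" and nonneg: "\<And>x. 0 \<le> f x"
  shows "((\<lambda>x. measure (density lborel f) {..x}) has_real_derivative f y) (at y)"
proof -
  let ?M = "density lborel f"
  have "f \<in> borel_measurable borel"
    using cont by (rule borel_measurable_continuous_onI)
  then have meas: "(\<lambda>x. ennreal (f x)) \<in> borel_measurable borel"
    by measurable
  have Icc: "measure ?M {a..x} = integral {a..x} f" if "a \<le> x" for a x
  proof -
    have "(f has_integral integral {a..x} f) {a..x}"
      using integrable_continuous_interval cont continuous_on_subset by blast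
    then have "emeasure ?M {a..x} = ennreal (integral {a..x} f)"
      by (subst emeasure_density) (auto intro: nn_integral_has_integral_lebesgue' nonneg meas)
    moreover have "0 \<le> integral {a..x} f"
      using integrable_continuous_interval cont continuous_on_subset
      by (blast intro: integral_nonneg nonneg)
    ultimately show ?thesis by (simp add: measure_def)
  qed
  have split: "measure ?M {..x} = measure ?M {..<y-1} + integral {y-1..x} f" if "y - 1 < x" for x
  proof -
    have "{..x} = {..<y-1} \<union> {y-1..x}" using that by auto
    then have "measure ?M {..x} = measure ?M {..<y-1} + measure ?M {y-1..x}"
      by (simp add: finite_measure.finite_measure_Union[OF fin] ivl_disj_int)
    then show ?thesis using Icc that by simp
  qed
  have "((\<lambda>x. integral {y-1..x} f) has_real_derivative f y) (at y within {y-1..y+1})"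
    using cont continuous_on_subset by (intro integral_has_real_derivative) auto
  then have "((\<lambda>x. measure ?M {..<y-1} + integral {y-1..x} f) has_real_derivative f y) (at y)"
    by (auto simp: at_within_Icc_at intro!: derivative_eq_intros)
  then show ?thesis
    by (rule has_field_derivative_transform_within_open[where S = "{y-1<..}"]) (auto simp: split)
qed

lemma gauss_cdf_has_real_derivative:
  assumes "0 < s"
  shows "((\<lambda>x. measure (gauss mu s) {..x}) has_real_derivative normal_density mu s y) (at y)"
  unfolding gauss_def
proof (rule cdf_density_has_real_derivative)
  show "finite_measure (density lborel (normal_density mu s))"
    using prob_space_normal_density[OF assms] by (rule prob_space.finite_measure)
  show "continuous_on UNIV (normal_density mu s)"
    unfolding normal_density_def using assms by (intro continuous_intros) auto
qed simp

lemma gauss_measure_greaterThan: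
  assumes "0 < s"
  shows "measure (gauss mu s) {c<..} = 1 - measure (gauss mu s) {..c}"
proof -
  have "UNIV - {..c} = {c<..}" by auto
  then show ?thesis
    using prob_space.prob_compl[OF prob_space_normal_density[OF assms], of "{..c}"]
    by (simp add: gauss_def)
qed

lemma R_rob_has_real_derivative:
  assumes "0 < K"
  shows "(R_rob mu_m mu_p K eps has_real_derivative g mu_m mu_p eps t K / (2 * sqrt (2 * pi))) (at t)"
proof -
  have R: "R_rob mu_m mu_p K eps = (\<lambda>t. measure (gauss mu_p K) {..t + eps} / 2
                                    + (1 - measure (gauss mu_m 1) {..t - eps}) / 2)"
    by (rule ext) (simp add: R_rob_def gauss_measure_greaterThan assms)
  have "((\<lambda>t. measure (gauss mu_p K) {..t + eps}) has_real_derivative normal_density mu_p K (t + eps)) (at t)"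
    using DERIV_chain2[OF gauss_cdf_has_real_derivative[OF assms] DERIV_add[OF DERIV_ident DERIV_const]]
    by simp
  moreover have "((\<lambda>t. measure (gauss mu_m 1) {..t - eps}) has_real_derivative normal_density mu_m 1 (t - eps)) (at t)"
    using DERIV_chain2[OF gauss_cdf_has_real_derivative DERIV_diff[OF DERIV_ident DERIV_const]]
    by simp
  ultimately have "(R_rob mu_m mu_p K eps has_real_derivative
      normal_density mu_p K (t + eps) / 2 - normal_density mu_m 1 (t - eps) / 2) (at t)"
    unfolding R by (auto intro!: derivative_eq_intros)
  moreover have "normal_density mu_p K (t + eps) / 2 - normal_density mu_m 1 (t - eps) / 2
      = g mu_m mu_p eps t K / (2 * sqrt (2 * pi))"
    using assms by (simp add: normal_density_def g_def real_sqrt_mult field_simps)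
  ultimately show ?thesis by simp
qed

lemma DERIV_nonpos_at_minimum_from_left:
  fixes f :: "real \<Rightarrow> real"
  assumes "(f has_real_derivative l) (at x within {a..x})" and "a < x"
    and "\<And>y. a \<le> y \<Longrightarrow> y \<le> x \<Longrightarrow> f x \<le> f y"
  shows "l \<le> 0"
proof (rule ccontr)
  assume "\<not> l \<le> 0"
  then obtain d where "0 < d" and d: "\<And>h. 0 < h \<Longrightarrow> x - h \<in> {a..x} \<Longrightarrow> h < d \<Longrightarrow> f (x - h) < f x"
    using has_real_derivative_pos_inc_left[OF assms(1)] by force
  define h where "h = min (d / 2) (x - a)"
  have "0 < h" "h < d" "x - h \<in> {a..x}"
    using \<open>0 < d\<close> \<open>a < x\<close> by (auto simp: h_def)
  then show False
    using d assms(3)[of "x - h"] by fastforce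
qed

lemma g_pos_iff:
  assumes "0 < K"
  shows "0 < g mu_m mu_p eps t K \<longleftrightarrow> 2 * ln K < (t - eps - mu_m)^2 - (t + eps - mu_p)^2 / K^2"
proof -
  have "1 / K * exp (- ((t + eps - mu_p)^2) / (2 * K^2)) = exp (- ((t + eps - mu_p)^2) / (2 * K^2) - ln K)"
    using assms by (simp add: exp_diff)
  then show ?thesis
    using assms by (simp add: g_def field_simps)
qed

lemma square_diff_greater_right_of_crossing:
  fixes a b c L e u t :: real
  assumes "c \<le> 1"
    and "(e - a)^2 - c * (e - b)^2 < L" and "L < (u - a)^2 - c * (u - b)^2"
    and "e < u" and "u \<le> t"
  shows "L < (t - a)^2 - c * (t - b)^2"
proof -
  define q where "q x = (x - a)^2 - c * (x - b)^2 - L" for x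
  have "(u - e) * q t = (t - e) * q u - (t - u) * q e + (1 - c) * ((t - e) * (t - u) * (u - e))"
    unfolding q_def by (simp add: algebra_simps power2_eq_square)
  moreover have "0 < (t - e) * q u" "(t - u) * q e \<le> 0" "0 \<le> (1 - c) * ((t - e) * (t - u) * (u - e))"
    using assms by (auto simp: q_def mult_nonneg_nonpos)
  ultimately have "0 < (u - e) * q t" by linarith
  then show ?thesis
    using \<open>e < u\<close> by (simp add: q_def zero_less_mult_iff)
qed

lemma g_pos_right_of_pos:
  assumes "1 < K" and "mu_m + eps < theta" and "theta \<le> t"
    and "0 < g mu_m mu_p eps theta K"
  shows "0 < g mu_m mu_p eps t K"
proof -
  have K: "0 < K" using assms(1) by simp
  have sq: "(x - eps - mu_m)^2 - (x + eps - mu_p)^2 / K^2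
      = (x - (mu_m + eps))^2 - 1 / K^2 * (x - (mu_p - eps))^2" for x
    by (simp add: algebra_simps)
  have "(mu_m + eps - (mu_m + eps))^2 - 1 / K^2 * (mu_m + eps - (mu_p - eps))^2 \<le> 0"
    by simp
  moreover have "0 < 2 * ln K" using assms(1) by simp
  ultimately have "(mu_m + eps - (mu_m + eps))^2 - 1 / K^2 * (mu_m + eps - (mu_p - eps))^2 < 2 * ln K"
    by linarith
  moreover have "2 * ln K < (theta - (mu_m + eps))^2 - 1 / K^2 * (theta - (mu_p - eps))^2"
    using assms(4) by (simp only: g_pos_iff[OF K] sq)
  moreover have "1 / K^2 \<le> 1" using assms(1) by simp
  ultimately have "2 * ln K < (t - (mu_m + eps))^2 - 1 / K^2 * (t - (mu_p - eps))^2"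
    using square_diff_greater_right_of_crossing assms(2,3) by blast
  then show ?thesis by (simp only: g_pos_iff[OF K] sq)
qed

lemma g_nonpos_left_of_robust_minimizer:
  assumes "1 < K" and "0 \<le> eps"
    and "theta_r \<in> {mu_m..mu_p}"
    and "\<forall>t\<in>{mu_m..mu_p}. R_rob mu_m mu_p K eps theta_r \<le> R_rob mu_m mu_p K eps t"
    and "mu_m + eps < theta" and "theta \<le> theta_r"
  shows "g mu_m mu_p eps theta K \<le> 0"
proof (rule ccontr)
  assume "\<not> ?thesis"
  then have "0 < g mu_m mu_p eps theta_r K"
    using g_pos_right_of_pos assms by simp
  moreover have "g mu_m mu_p eps theta_r K / (2 * sqrt (2 * pi)) \<le> 0"
  proof (rule DERIV_nonpos_at_minimum_from_left)
    show "(R_rob mu_m mu_p K eps has_real_derivative g mu_m mu_p eps theta_r K / (2 * sqrt (2 * pi)))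
        (at theta_r within {mu_m..theta_r})"
      using R_rob_has_real_derivative assms(1) by (simp add: has_field_derivative_at_within)
  qed (use assms in auto)
  ultimately show False
    using pi_gt_zero by (simp add: divide_le_0_iff)
qed

lemma g_le_weighted_g0:
  assumes "0 < K"
    and "(K^2 - 1) * eps^2 \<le> 2 * eps * (K^2 * (theta - mu_m) + theta - mu_p)"
  shows "g mu_m mu_p eps theta K \<le> exp ((theta - mu_m) * eps - eps^2 / 2) * g mu_m mu_p 0 theta K"
proof -
  define w where "w = (theta - mu_m) * eps - eps^2 / 2"
  have "- ((theta - eps - mu_m)^2) / 2 = w + - ((theta - mu_m)^2) / 2"
    by (simp add: w_def field_simps power2_eq_square)
  then have second: "exp (- ((theta - eps - mu_m)^2) / 2) = exp w * exp (- ((theta - mu_m)^2) / 2)"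
    by (simp add: exp_add[symmetric])
  have "(theta - mu_p)^2 - (theta + eps - mu_p)^2 = - 2 * eps * (theta - mu_p) - eps^2"
    by (simp add: algebra_simps power2_eq_square)
  also have "\<dots> \<le> 2 * K^2 * w"
    using assms(2) by (simp add: w_def algebra_simps power2_eq_square)
  finally have "- ((theta + eps - mu_p)^2) / (2 * K^2) \<le> w + - ((theta - mu_p)^2) / (2 * K^2)"
    using assms(1) by (simp add: field_simps)
  then have first: "exp (- ((theta + eps - mu_p)^2) / (2 * K^2)) \<le> exp w * exp (- ((theta - mu_p)^2) / (2 * K^2))"
    by (simp add: exp_add[symmetric])
  show ?thesis
    unfolding g_def second w_def[symmetric]
    using mult_left_mono[OF first, of "1 / K"] assms(1) by (simp add: algebra_simps)
qed

lemma g_le_g0_of_nonpos: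
  assumes "g mu_m mu_p eps theta K \<le> 0" and "0 < K" and "0 \<le> eps" and "eps \<le> 2 * (theta - mu_m)"
    and "(K^2 - 1) * eps^2 \<le> 2 * eps * (K^2 * (theta - mu_m) + theta - mu_p)"
  shows "g mu_m mu_p eps theta K \<le> g mu_m mu_p 0 theta K"
proof -
  define w where "w = exp ((theta - mu_m) * eps - eps^2 / 2)"
  have le_w: "g mu_m mu_p eps theta K \<le> w * g mu_m mu_p 0 theta K"
    using g_le_weighted_g0 assms(2,5) by (simp add: w_def)
  have "eps * eps \<le> 2 * (theta - mu_m) * eps"
    using assms(3,4) by (intro mult_right_mono) auto
  then have "1 \<le> w"
    by (simp add: w_def power2_eq_square algebra_simps)
  show ?thesis
  proof (cases "g mu_m mu_p 0 theta K \<le> 0")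
    case True
    then show ?thesis
      using le_w mult_right_mono_neg[OF \<open>1 \<le> w\<close> True] by simp
  qed (use assms(1) in simp)
qed

lemma phi_strict_mono_on: "strict_mono_on {1..} phi"
proof (rule strict_mono_onI)
  fix a b :: real
  assume "a \<in> {1..}" "b \<in> {1..}" "a < b"
  then have "1 \<le> a" "a < b" by auto
  have "1 * b \<le> a * b" using \<open>1 \<le> a\<close> \<open>a < b\<close> by (intro mult_right_mono) auto
  then have "1 < a * b" using \<open>1 \<le> a\<close> \<open>a < b\<close> by linarith
  have "1 / a - 1 / b = (b - a) / (a * b)"
    using \<open>1 \<le> a\<close> \<open>a < b\<close> by (simp add: field_simps)
  also have "\<dots> < b - a"
    using \<open>1 < a * b\<close> \<open>a < b\<close> mult_strict_left_mono[of 1 "a * b" "b - a"]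
    by (simp add: divide_less_eq)
  finally show "phi a < phi b" unfolding phi_def by simp
qed

lemma phi_inv:
  assumes "2 \<le> y"
  shows "1 \<le> phi_inv y" and "phi (phi_inv y) = y"
proof -
  define r where "r = sqrt (y^2 - 4)"
  define x where "x = (y + r) / 2"
  have "2 * 2 \<le> y * y" using assms by (intro mult_mono) auto
  then have "0 \<le> r" and r: "r * r = y * y - 4"
    by (simp_all add: r_def power2_eq_square flip: power2_eq_square)
  have "1 \<le> x" using assms \<open>0 \<le> r\<close> by (simp add: x_def)
  moreover have "phi x = y"
  proof -
    have "(y + r) * (y - r) = 4" using r by (simp add: algebra_simps)
    then have "1 / x = (y - r) / 2" using \<open>1 \<le> x\<close> by (auto simp: x_def field_simps)
    then show ?thesis by (simp add: phi_def x_def field_simps)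
  qed
  moreover have "z = x" if "1 \<le> z" "phi z = y" for z
    using strict_mono_on_eqD[OF phi_strict_mono_on] that \<open>1 \<le> x\<close> \<open>phi x = y\<close> by simp
  ultimately have "\<exists>!x. 1 \<le> x \<and> phi x = y" by blast
  then show "1 \<le> phi_inv y" and "phi (phi_inv y) = y"
    unfolding phi_inv_def by (metis (mono_tags, lifting) theI')+
qed

text \<open>The hypothesis
  eps \<le> d/4 keeps d/eps - 2 in the range [2, \<infinity>) of phi, where phi_inv is not a junk value.\<close>
lemma eps_bound_of_less_B_K:
  assumes "0 \<le> eps" and "eps \<le> (mu_p - mu_m) / 4" and "1 < K" and "K < B_K mu_m mu_p eps"
  shows "eps * (K + 1)^2 \<le> K * (mu_p - mu_m)"
proof (cases "eps = 0")
  case True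
  then show ?thesis using assms by simp
next
  case False
  define y where "y = (mu_p - mu_m) / eps - 2"
  have eps: "0 < eps" using False assms(1) by simp
  have "2 \<le> y" using eps assms(2) by (simp add: y_def field_simps)
  moreover have "K < phi_inv y" using assms(4) False by (simp add: B_K_def y_def)
  ultimately have "phi K < y"
    using strict_mono_onD[OF phi_strict_mono_on, of K "phi_inv y"] phi_inv assms(3) by simp
  then have "K + 1 / K + 2 < (mu_p - mu_m) / eps"
    by (simp add: phi_def y_def)
  then have "K * (eps * (K + 1 / K + 2)) < K * (mu_p - mu_m)"
    using eps assms(3) by (simp add: less_divide_eq mult.commute)
  moreover have "K * (eps * (K + 1 / K + 2)) = eps * (K + 1)^2"
    using assms(3) by (simp add: field_simps power2_eq_square)
  ultimately show ?thesis by simp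
qed

lemma theta_f_le_imp_bounds:
  assumes "mu_m < mu_p" and "1 < K" and "0 \<le> eps"
    and "eps * (K + 1)^2 \<le> K * (mu_p - mu_m)" and "theta_f mu_m mu_p K \<le> theta"
  shows "mu_m + eps < theta"
    and "(K^2 - 1) * eps^2 \<le> 2 * eps * (K^2 * (theta - mu_m) + theta - mu_p)"
proof -
  define x where "x = theta - mu_m"
  have K1: "0 < K + 1" using assms(2) by simp
  have "(mu_p - mu_m) / (K + 1) \<le> x"
    using assms(5) by (simp add: theta_f_def x_def)
  then have d: "mu_p - mu_m \<le> (K + 1) * x"
    using K1 by (simp add: pos_divide_le_eq mult.commute)
  then have "0 < (K + 1) * x"
    using assms(1) by linarith
  then have "0 < x"
    using K1 by (simp add: zero_less_mult_iff)
  have "eps * (K + 1) * (K + 1) \<le> K * x * (K + 1)"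
    using assms(4) mult_left_mono[OF d, of K] assms(2) by (simp add: power2_eq_square algebra_simps)
  then have ex: "eps * (K + 1) \<le> K * x"
    using K1 by simp
  also have "\<dots> < x * (K + 1)"
    using \<open>0 < x\<close> by (simp add: algebra_simps)
  finally show "mu_m + eps < theta"
    using K1 by (simp add: x_def)
  have "(K^2 - 1) * eps = (K - 1) * (eps * (K + 1))"
    by (simp add: algebra_simps power2_eq_square)
  also have "\<dots> \<le> (K - 1) * (K * x)"
    using ex assms(2) by simp
  also have "\<dots> \<le> 2 * ((K - 1) * (K * x))"
    using assms(2) \<open>0 < x\<close> by simp
  also have "\<dots> \<le> 2 * (K^2 * (theta - mu_m) + theta - mu_p)"
    using d by (simp add: x_def algebra_simps power2_eq_square)
  finally have "eps * ((K^2 - 1) * eps) \<le> eps * (2 * (K^2 * (theta - mu_m) + theta - mu_p))"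
    using assms(3) by (rule mult_left_mono)
  then show "(K^2 - 1) * eps^2 \<le> 2 * eps * (K^2 * (theta - mu_m) + theta - mu_p)"
    by (simp add: power2_eq_square algebra_simps)
qed

theorem mainTheorem6:
  fixes mu_m mu_p eps K theta_r theta :: real
  assumes "mu_m < mu_p"
    and "0 \<le> eps" and "eps \<le> (mu_p - mu_m) / 4"
    and "1 < K" and "K < B_K mu_m mu_p eps"
    and "theta_r \<in> {mu_m..mu_p}"
    and "\<forall>t\<in>{mu_m..mu_p}. R_rob mu_m mu_p K eps theta_r \<le> R_rob mu_m mu_p K eps t"
    and "theta_f mu_m mu_p K \<le> theta" and "theta \<le> theta_r"
  shows "g mu_m mu_p eps theta K \<le> g mu_m mu_p 0 theta K"
proof -
  have "eps * (K + 1)^2 \<le> K * (mu_p - mu_m)"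
    using eps_bound_of_less_B_K assms(2-5) .
  then have left: "mu_m + eps < theta"
    and weight: "(K^2 - 1) * eps^2 \<le> 2 * eps * (K^2 * (theta - mu_m) + theta - mu_p)"
    using theta_f_le_imp_bounds assms(1,2,4,8) by blast+
  have "g mu_m mu_p eps theta K \<le> 0"
    using g_nonpos_left_of_robust_minimizer assms(2,4,6,7,9) left by blast
  moreover have "eps \<le> 2 * (theta - mu_m)"
    using left assms(2) by simp
  ultimately show ?thesis
    using assms(2,4) weight by (intro g_le_g0_of_nonpos) auto
qed

end
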